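(* Let $1<k<n-1$ and let $H=(H_{\bm{a},\bm{b}})_{\bm{a},\bm{b}\in\mathcal{A}_k}$ be a $\binom{n}{k}\times\binom{n}{k}$ Hermitian matrix. Then for $i,j\in\{1,\dots,n\}$, $$\pi(H)_{ij}=\frac{1}{k}\sum_{\substack{\bm{l}\in\mathcal{A}_{k-1}\\ \{l_1,\dots,l_{k-1}\}\not\ni i,j}}\mathrm{sgn}(i,\bm{l})\,\mathrm{sgn}(j,\bm{l})\,H_{\mathrm{sr}(i,\bm{l}),\mathrm{sr}(j,\bm{l})},$$ where $(i,\bm{l})$ denotes $(i,l_1,\dots,l_{k-1})$ and the sum is over $\bm{l}$ containing neither $i$ nor $j$.
   Context: $\mathcal{A}_r=\{(a_1,\dots,a_r)\in\{1,\dots,n\}^{\times r}: a_1<\dots<a_r\}$; $\binom{n}{k}\times\binom{n}{k}$ matrices are indexed by $\mathcal{A}_k$ (basis $e_{a_1}\wedge\cdots\wedge e_{a_k}$ of $\wedge^k\mathbb{C}^n$). For $\bm{i}\in\{1,\dots,n\}^{\times k}$: $\mathrm{sgn}(\bm{i})=0$ if the entries of $\bm{i}$ are not all distinct, and otherwise $\mathrm{sgn}(\bm{i})=\mathrm{sgn}(\sigma)$ for the unique $\sigma\in\mathfrak{S}_k$ sorting $\bm{i}$ into increasing order; $\mathrm{sr}(\bm{i})$ is $\bm{i}$ sorted in nondecreasing order. $A$ is the $n^k\times\binom{n}{k}$ matrix with $A_{\bm{i},\bm{a}}=\frac{\mathrm{sgn}(\bm{i})}{\sqrt{k!}}\delta(\mathrm{sr}(\bm{i}),\bm{a})$.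 For an $n^k\times n^k$ matrix $M$, $\pi_1(M)_{i,j}=\sum_{l_1,\dots,l_{k-1}=1}^nM_{(i,l_1,\dots,l_{k-1}),(j,l_1,\dots,l_{k-1})}$, and $\pi(H)=\pi_1(AHA^T)$. *)

theory Defs
  imports "HOL-Analysis.Analysis" "HOL-Combinatorics.Permutations"
begin

definition tuples :: "nat \<Rightarrow> nat \<Rightarrow> nat list set" where
  "tuples n r = {xs. length xs = r \<and> set xs \<subseteq> {1..n}}"

definition incr_tuples :: "nat \<Rightarrow> nat \<Rightarrow> nat list set" where
  "incr_tuples n r = {xs \<in> tuples n r. sorted_wrt (<) xs}"

definition sr :: "nat list \<Rightarrow> nat list" where
  "sr xs = sort xs"

definition sgn_tup :: "nat list \<Rightarrow> complex" where
  "sgn_tup xs = (if distinct xs then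
      of_int (sign (THE \<sigma>. \<sigma> permutes {..<length xs} \<and>
                   map (\<lambda>m. xs ! \<sigma> m) [0..<length xs] = sort xs))
    else 0)"

definition Amat :: "nat \<Rightarrow> nat list \<Rightarrow> nat list \<Rightarrow> complex" where
  "Amat k i a = sgn_tup i / of_real (sqrt (real (fact k))) * (if sr i = a then 1 else 0)"

definition AHAT :: "nat \<Rightarrow> nat \<Rightarrow> (nat list \<Rightarrow> nat list \<Rightarrow> complex) \<Rightarrow> nat list \<Rightarrow> nat list \<Rightarrow> complex" where
  "AHAT n k H i j = (\<Sum>a\<in>incr_tuples n k. \<Sum>b\<in>incr_tuples n k. Amat k i a * H a b * Amat k j b)"

definition pi1 :: "nat \<Rightarrow> nat \<Rightarrow> (nat list \<Rightarrow> nat list \<Rightarrow> complex) \<Rightarrow> nat \<Rightarrow> nat \<Rightarrow> complex" where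
  "pi1 n k M i j = (\<Sum>l\<in>tuples n (k - 1). M (i # l) (j # l))"

definition piH :: "nat \<Rightarrow> nat \<Rightarrow> (nat list \<Rightarrow> nat list \<Rightarrow> complex) \<Rightarrow> nat \<Rightarrow> nat \<Rightarrow> complex" where
  "piH n k H = pi1 n k (AHAT n k H)"

end

theory Submission
  imports Defs "HOL-Combinatorics.Multiset_Permutations"
begin

text \<open>Since A has a single nonzero entry in each row, (A H A^T) at the tuples (i,l) and (j,l)
  equals sgn(i,l) sgn(j,l) H(sr(i,l), sr(j,l)) / k!. The partial trace sums this over all
  (k-1)-tuples l. Only tuples of distinct entries avoiding i and j contribute, and reordering l
  by a permutation multiplies both signs by the same factor, so the summand depends only on
  the set of entries of l. Each set is hit by (k-1)! orderings, whence the factor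
  (k-1)!/k! = 1/k.\<close>

lemma sort_eq_if_mset_eq: "mset xs = mset ys \<Longrightarrow> sort xs = sort ys"
  by (metis properties_for_sort mset_sort sorted_sort)

lemma sgn_tup_nondistinct: "\<not> distinct xs \<Longrightarrow> sgn_tup xs = 0"
  by (simp add: sgn_tup_def)

lemma sgn_tup_eq_sign:
  assumes "distinct xs" "p permutes {..<length xs}" "permute_list p xs = sort xs"
  shows "sgn_tup xs = of_int (sign p)"
proof -
  have "(THE \<sigma>. \<sigma> permutes {..<length xs} \<and>
          map (\<lambda>m. xs ! \<sigma> m) [0..<length xs] = sort xs) = p"
  proof (rule the_equality)
    show "p permutes {..<length xs} \<and> map (\<lambda>m. xs ! p m) [0..<length xs] = sort xs"
      using assms by (simp add: permute_list_def)
  next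
    fix \<sigma> assume \<sigma>: "\<sigma> permutes {..<length xs} \<and> map (\<lambda>m. xs ! \<sigma> m) [0..<length xs] = sort xs"
    then have same_list: "permute_list \<sigma> xs = permute_list p xs"
      using assms(3) by (simp add: permute_list_def)
    show "\<sigma> = p"
    proof
      fix m
      show "\<sigma> m = p m"
      proof (cases "m < length xs")
        case True
        then have "xs ! \<sigma> m = xs ! p m"
          using same_list \<sigma> assms(2) by (metis permute_list_nth)
        moreover have "\<sigma> m < length xs" "p m < length xs"
          using True \<sigma> assms(2) permutes_in_image by fastforce+
        ultimately show ?thesis
          using assms(1) nth_eq_iff_index_eq by blast
      next
        case False
        then show ?thesis
          using \<sigma> assms(2) by (metis lessThan_iff permutes_not_in)
      qed
    qed
  qed
  then show ?thesis
    using assms(1) by (simp add: sgn_tup_def)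
qed

lemma sgn_tup_permute_list:
  assumes "q permutes {..<length xs}"
  shows "sgn_tup (permute_list q xs) = of_int (sign q) * sgn_tup xs"
proof (cases "distinct xs")
  case False
  then show ?thesis
    using assms by (simp add: sgn_tup_nondistinct)
next
  case True
  obtain p where p: "p permutes {..<length xs}" "permute_list p xs = sort xs"
    using mset_eq_permutation[of "sort xs" xs] by auto
  have perm: "inv q \<circ> p permutes {..<length xs}"
    using p(1) assms by (simp add: permutes_compose permutes_inv)
  have "permute_list (inv q \<circ> p) (permute_list q xs) = permute_list (q \<circ> (inv q \<circ> p)) xs"
    using permute_list_compose[OF perm, of q] by simp
  also have "q \<circ> (inv q \<circ> p) = p"
    using assms by (simp add: o_assoc permutes_inv_o(1))
  also have "permute_list p xs = sort xs"
    by (fact p(2))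
  also have "\<dots> = sort (permute_list q xs)"
    using assms by (intro sort_eq_if_mset_eq) simp
  finally have "permute_list (inv q \<circ> p) (permute_list q xs) = sort (permute_list q xs)" .
  moreover have "distinct (permute_list q xs)" "inv q \<circ> p permutes {..<length (permute_list q xs)}"
    using True assms perm by simp_all
  ultimately have "sgn_tup (permute_list q xs) = of_int (sign (inv q \<circ> p))"
    using sgn_tup_eq_sign by blast
  also have "sign (inv q \<circ> p) = sign q * sign p"
    using assms p(1) permutation_permutes[of q] permutation_permutes[of p]
    by (auto simp: permutation_inverse sign_compose sign_inverse)
  finally show ?thesis
    using sgn_tup_eq_sign[OF True p] by simp
qed

lemma permute_list_update_head:
  assumes "p permutes {..<length xs}" "p 0 = 0"
  shows "permute_list p (xs[0 := a]) = (permute_list p xs)[0 := a]"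
proof (rule nth_equalityI)
  fix m assume "m < length (permute_list p (xs[0 := a]))"
  then have m: "m < length xs" by simp
  have "p m \<noteq> 0" if "m \<noteq> 0"
    using that assms by (metis permutes_inj injD)
  then show "permute_list p (xs[0 := a]) ! m = (permute_list p xs)[0 := a] ! m"
    using m assms(1) permutes_in_image[OF assms(1)] assms(2)
    by (cases "m = 0") (simp_all add: permute_list_nth)
qed simp

text \<open>Reordering l moves i and j in the same way, because a permutation matching (i,l) to (i,l')
  must fix the head position; the two signs thus change by the same factor.\<close>
lemma sgn_tup_Cons_mult_mset_eq:
  assumes "mset l = mset l'"
  shows "sgn_tup (i # l) * sgn_tup (j # l) = sgn_tup (i # l') * sgn_tup (j # l')"
proof (cases "distinct (i # l') \<and> distinct (j # l')")
  case False
  moreover have "distinct (a # l) \<longleftrightarrow> distinct (a # l')" for a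
    by (rule mset_eq_imp_distinct_iff) (simp add: assms)
  ultimately show ?thesis
    by (metis sgn_tup_nondistinct mult_zero_left mult_zero_right)
next
  case True
  obtain q where q: "q permutes {..<length (i # l')}" "permute_list q (i # l') = i # l"
    using mset_eq_permutation[of "i # l" "i # l'"] assms by auto
  have "q 0 < length (i # l')"
    using permutes_in_image[OF q(1)] by simp
  moreover have "(i # l') ! q 0 = (i # l') ! 0"
    using permute_list_nth[OF q(1), of 0] q(2) by simp
  ultimately have "q 0 = 0"
    using True nth_eq_iff_index_eq[of "i # l'" "q 0" 0] by simp
  then have "permute_list q (j # l') = j # l"
    using permute_list_update_head[OF q(1), of j] q(2) by simp
  moreover have "q permutes {..<length (j # l')}"
    using q(1) by simp
  ultimately have sgn_j: "sgn_tup (j # l) = of_int (sign q) * sgn_tup (j # l')"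
    using sgn_tup_permute_list by metis
  have sgn_i: "sgn_tup (i # l) = of_int (sign q) * sgn_tup (i # l')"
    using sgn_tup_permute_list[OF q(1)] unfolding q(2) .
  have "sgn_tup (i # l) * sgn_tup (j # l)
      = of_int (sign q * sign q) * (sgn_tup (i # l') * sgn_tup (j # l'))"
    unfolding sgn_i sgn_j of_int_mult by (simp only: mult_ac)
  then show ?thesis
    by simp
qed

lemma finite_tuples: "finite (tuples n r)"
  using finite_lists_length_eq[of "{1..n}" r] unfolding tuples_def by (simp add: conj_commute)

lemma finite_incr_tuples: "finite (incr_tuples n r)"
  using finite_tuples by (simp add: incr_tuples_def)

lemma sort_in_incr_tuples: "xs \<in> tuples n r \<Longrightarrow> distinct xs \<Longrightarrow> sort xs \<in> incr_tuples n r"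
  by (simp add: incr_tuples_def tuples_def strict_sorted_iff)

lemma sort_fibre_incr_tuples:
  assumes "s \<in> incr_tuples n r"
  shows "{l \<in> tuples n r. distinct l \<and> sort l = s} = permutations_of_set (set s)"
proof -
  from assms have s: "sorted s" "distinct s" "length s = r" "set s \<subseteq> {1..n}"
    by (auto simp: incr_tuples_def tuples_def strict_sorted_iff)
  show ?thesis
  proof (intro set_eqI iffI)
    fix l assume "l \<in> {l \<in> tuples n r. distinct l \<and> sort l = s}"
    then have "set l = set s" "distinct l"
      by auto
    then show "l \<in> permutations_of_set (set s)"
      by (simp add: permutations_of_set_def)
  next
    fix l assume "l \<in> permutations_of_set (set s)"
    then have l: "set l = set s" "distinct l"
      by (auto simp: permutations_of_set_def)
    then have "length l = r"
      using s by (metis distinct_card)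
    moreover have "sort l = s"
      using l s by (intro sorted_distinct_set_unique) auto
    ultimately show "l \<in> {l \<in> tuples n r. distinct l \<and> sort l = s}"
      using l s by (auto simp: tuples_def)
  qed
qed

lemma sum_tuples_eq_fact_mult_sum_incr_tuples:
  fixes g :: "nat list \<Rightarrow> 'a::comm_semiring_1"
  assumes nondistinct: "\<And>l. \<not> distinct l \<Longrightarrow> g l = 0"
    and symmetric: "\<And>l. distinct l \<Longrightarrow> g l = g (sort l)"
  shows "(\<Sum>l\<in>tuples n r. g l) = of_nat (fact r) * (\<Sum>l\<in>incr_tuples n r. g l)"
proof -
  let ?fibre = "\<lambda>s. {l \<in> tuples n r. distinct l \<and> sort l = s}"
  have "(\<Sum>l\<in>tuples n r. g l) = (\<Sum>l\<in>{l \<in> tuples n r. distinct l}. g l)"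
    using nondistinct by (intro sum.mono_neutral_right finite_tuples) auto
  also have "\<dots> = (\<Sum>s\<in>incr_tuples n r. \<Sum>l\<in>?fibre s. g l)"
    using finite_tuples sort_in_incr_tuples
    by (subst sum.group[symmetric, OF _ finite_incr_tuples]) (auto intro!: sum.cong)
  also have "\<dots> = (\<Sum>s\<in>incr_tuples n r. of_nat (fact r) * g s)"
  proof (rule sum.cong[OF refl])
    fix s assume s: "s \<in> incr_tuples n r"
    have "card (set s) = r"
      using s by (auto simp: incr_tuples_def tuples_def strict_sorted_iff distinct_card)
    have "(\<Sum>l\<in>?fibre s. g l) = (\<Sum>l\<in>?fibre s. g s)"
      using symmetric by (intro sum.cong) auto
    also have "\<dots> = of_nat (fact r) * g s"
      using sort_fibre_incr_tuples[OF s] \<open>card (set s) = r\<close> by simp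
    finally show "(\<Sum>l\<in>?fibre s. g l) = of_nat (fact r) * g s" .
  qed
  finally show ?thesis
    by (simp add: sum_distrib_left)
qed

lemma sum_Amat_mult:
  assumes "xs \<in> tuples n k"
  shows "(\<Sum>a\<in>incr_tuples n k. Amat k xs a * F a) = Amat k xs (sr xs) * F (sr xs)"
proof -
  have "(\<Sum>a\<in>incr_tuples n k. Amat k xs a * F a)
      = (\<Sum>a\<in>incr_tuples n k. if sr xs = a then Amat k xs a * F a else 0)"
    by (intro sum.cong) (auto simp: Amat_def)
  also have "\<dots> = Amat k xs (sr xs) * F (sr xs)"
    using assms sort_in_incr_tuples[of xs n k]
    by (cases "distinct xs") (simp_all add: finite_incr_tuples sr_def Amat_def sgn_tup_nondistinct)
  finally show ?thesis .
qed

lemma AHAT_tuples: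
  assumes "x \<in> tuples n k" "y \<in> tuples n k"
  shows "AHAT n k H x y = sgn_tup x * sgn_tup y / fact k * H (sr x) (sr y)"
proof -
  have "AHAT n k H x y
      = (\<Sum>a\<in>incr_tuples n k. Amat k x a * (\<Sum>b\<in>incr_tuples n k. Amat k y b * H a b))"
    by (simp add: AHAT_def sum_distrib_left mult_ac)
  also have "\<dots> = Amat k x (sr x) * Amat k y (sr y) * H (sr x) (sr y)"
    using assms by (simp add: sum_Amat_mult mult.assoc)
  also have "\<dots> = sgn_tup x * sgn_tup y / (of_real (sqrt (fact k)) * of_real (sqrt (fact k)))
      * H (sr x) (sr y)"
    by (simp add: Amat_def)
  also have "(of_real (sqrt (fact k)) * of_real (sqrt (fact k)) :: complex) = fact k"
    unfolding of_real_mult[symmetric] by simp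
  finally show ?thesis .
qed

lemma piH_eq_sum_tuples:
  assumes "0 < k" "i \<in> {1..n}" "j \<in> {1..n}"
  shows "piH n k H i j = (\<Sum>l\<in>tuples n (k - 1).
      sgn_tup (i # l) * sgn_tup (j # l) * H (sr (i # l)) (sr (j # l))) / fact k"
proof -
  have "a # l \<in> tuples n k" if "a \<in> {1..n}" "l \<in> tuples n (k - 1)" for a l
    using that assms(1) by (auto simp: tuples_def)
  then show ?thesis
    using assms by (simp add: piH_def pi1_def AHAT_tuples sum_divide_distrib)
qed

theorem lemma3p3:
  fixes n k :: nat and H :: "nat list \<Rightarrow> nat list \<Rightarrow> complex" and i j :: nat
  assumes "1 < k" and "k < n - 1"
    and herm: "\<forall>a\<in>incr_tuples n k. \<forall>b\<in>incr_tuples n k. H a b = cnj (H b a)"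
    and "i \<in> {1..n}" and "j \<in> {1..n}"
  shows "piH n k H i j =
    (1 / of_nat k) * (\<Sum>l\<in>{l \<in> incr_tuples n (k - 1). i \<notin> set l \<and> j \<notin> set l}.
        sgn_tup (i # l) * sgn_tup (j # l) * H (sr (i # l)) (sr (j # l)))"
proof -
  define f where "f l = sgn_tup (i # l) * sgn_tup (j # l) * H (sr (i # l)) (sr (j # l))" for l
  have f_vanishes: "f l = 0" if "\<not> (distinct l \<and> i \<notin> set l \<and> j \<notin> set l)" for l
    using that by (auto simp: f_def sgn_tup_nondistinct)
  have f_sort: "f l = f (sort l)" for l
  proof -
    have "sr (a # l) = sr (a # sort l)" for a
      unfolding sr_def by (intro sort_eq_if_mset_eq) simp
    then show ?thesis
      using sgn_tup_Cons_mult_mset_eq[of l "sort l" i j] by (simp add: f_def)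
  qed
  have "piH n k H i j = (\<Sum>l\<in>tuples n (k - 1). f l) / fact k"
    using piH_eq_sum_tuples assms by (simp add: f_def)
  also have "\<dots> = fact (k - 1) * (\<Sum>l\<in>incr_tuples n (k - 1). f l) / fact k"
    using f_vanishes f_sort by (subst sum_tuples_eq_fact_mult_sum_incr_tuples) auto
  also have "(\<Sum>l\<in>incr_tuples n (k - 1). f l)
      = (\<Sum>l\<in>{l \<in> incr_tuples n (k - 1). i \<notin> set l \<and> j \<notin> set l}. f l)"
    using f_vanishes by (intro sum.mono_neutral_right finite_incr_tuples) auto
  also have "fact k = of_nat k * (fact (k - 1) :: complex)"
    using assms(1) by (intro fact_reduce) simp
  finally show ?thesis
    by (simp add: f_def)
qed

end
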